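(* Let $T\in\mathbb R^{m\times n}$ be injective and satisfy the positive cone condition, $y\in\mathbb R^m$, and $\lambda>0$. Then there exists $\varepsilon\in(0,\lambda)$ such that $N(\lambda)\subset N(\mu)$ for all $\mu\in[\lambda-\varepsilon,\lambda]$.
   Context: For $\lambda>0$, $x_\lambda$ is the unique minimizer of $x\mapsto\frac{\lambda}{2}\|Tx-y\|_2^2+\|x\|_1$ on $\mathbb R^n$; $N(\lambda)=\{i:x_\lambda^i=0\}$. Positive cone condition: for every nonempty $J\subset\{1,\dots,n\}$, with $T^J$ the submatrix of columns indexed by $J$ and $S_J=((T^J)^TT^J)^{-1}$, one has $(S_J)_{i,i}-\sum_{j\ne i}|(S_J)_{i,j}|\ge0$ for all $i\in J$. *)

theory Defs
  imports "HOL-Analysis.Analysis"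
begin

definition lasso_obj :: "real^'n^'m \<Rightarrow> real^'m \<Rightarrow> real \<Rightarrow> real^'n \<Rightarrow> real" where
  "lasso_obj T y lam x = lam / 2 * (norm (T *v x - y))^2 + (\<Sum>i\<in>UNIV. \<bar>x $ i\<bar>)"

definition lasso_min :: "real^'n^'m \<Rightarrow> real^'m \<Rightarrow> real \<Rightarrow> real^'n" where
  "lasso_min T y lam = (THE x. \<forall>z. lasso_obj T y lam x \<le> lasso_obj T y lam z)"

definition zero_set :: "real^'n^'m \<Rightarrow> real^'m \<Rightarrow> real \<Rightarrow> 'n set" where
  "zero_set T y lam = {i. lasso_min T y lam $ i = 0}"

text \<open>S_J = ((T^J)^T T^J)^{-1}, indexed by J x J (entries outside J x J set to 0).
  The entries of (T^J)^T T^J are the inner products of the columns i, j in J.\<close>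
definition S_J :: "real^'n^'m \<Rightarrow> 'n set \<Rightarrow> 'n \<Rightarrow> 'n \<Rightarrow> real" where
  "S_J T J = (THE S. (\<forall>i k. (i \<notin> J \<or> k \<notin> J) \<longrightarrow> S i k = 0) \<and>
      (\<forall>i\<in>J. \<forall>k\<in>J. (\<Sum>j\<in>J. (column i T \<bullet> column j T) * S j k) = (if i = k then 1 else 0)))"

definition positive_cone_condition :: "real^'n^'m \<Rightarrow> bool" where
  "positive_cone_condition T \<longleftrightarrow>
     (\<forall>J. J \<noteq> {} \<longrightarrow> (\<forall>i\<in>J. S_J T J i i - (\<Sum>j\<in>J - {i}. \<bar>S_J T J i j\<bar>) \<ge> 0))"

end

theory Submission
  imports Defs
begin

text \<open>
  A vector \<open>z\<close> minimises the LASSO objective at \<open>\<mu>\<close> iff \<open>\<mu> T\<^sup>T (y - T z)\<close> is a subgradient of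
  the \<open>\<ell>\<^sub>1\<close> norm at \<open>z\<close>. Let \<open>x = x\<^sub>\<lambda>\<close> have support \<open>I\<close>, and let \<open>w\<close>, supported on \<open>I\<close>, solve
  \<open>(T\<^sup>I)\<^sup>T T w = \<lambda> (T\<^sup>I)\<^sup>T (y - T x)\<close>. For \<open>\<mu> \<le> \<lambda>\<close> the point \<open>z = x + (1/\<lambda> - 1/\<mu>) w\<close> has
  \<open>\<mu> T\<^sup>T (y - T z) = (\<mu>/\<lambda>) \<lambda> T\<^sup>T (y - T x) + (1 - \<mu>/\<lambda>) T\<^sup>T T w\<close>, a convex combination. On \<open>I\<close>
  both terms agree, and \<open>z\<close> keeps the signs of \<open>x\<close> when \<open>\<mu>\<close> is close to \<open>\<lambda>\<close>. Off \<open>I\<close>, \<open>z\<close>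
  vanishes and what is needed is \<open>\<bar>(T\<^sup>T T w)\<^sub>j\<bar> \<le> 1\<close>; this is where the positive cone condition
  enters: for \<open>J = I \<union> {j}\<close>, row \<open>j\<close> of \<open>S\<^sub>J\<close> applied to \<open>T\<^sup>T T w\<close> gives
  \<open>S\<^sub>J(j,j) (T\<^sup>T T w)\<^sub>j = - (\<Sum>k\<in>I. S\<^sub>J(j,k) (T\<^sup>T T w)\<^sub>k)\<close>, while \<open>\<Sum>k\<in>I. \<bar>S\<^sub>J(j,k)\<bar> \<le> S\<^sub>J(j,j)\<close>.
  So \<open>z = x\<^sub>\<mu>\<close>, and \<open>z\<close> vanishes wherever \<open>x\<close> does.
\<close>

lemma inner_matrix_vector_mult_supported:
  fixes T :: "real^'n^'m"
  assumes "{i. u $ i \<noteq> 0} \<subseteq> J"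
  shows "(T *v u) \<bullet> v = (\<Sum>k\<in>J. u $ k * (column k T \<bullet> v))"
proof -
  have "(T *v u) \<bullet> v = (\<Sum>k\<in>UNIV. u $ k * (column k T \<bullet> v))"
    by (simp add: matrix_mult_sum inner_sum_left scalar_mult_eq_scaleR)
  also have "\<dots> = (\<Sum>k\<in>J. u $ k * (column k T \<bullet> v))"
    using assms by (intro sum.mono_neutral_right) auto
  finally show ?thesis .
qed

lemma inner_column_matrix_vector_mult:
  fixes T :: "real^'n^'m"
  assumes "{i. v $ i \<noteq> 0} \<subseteq> J"
  shows "column k T \<bullet> (T *v v) = (\<Sum>j\<in>J. (column k T \<bullet> column j T) * v $ j)"
  using inner_matrix_vector_mult_supported[OF assms, of T "column k T"]
  by (simp add: inner_commute mult.commute)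

lemma eq_0_if_orthogonal_to_columns:
  fixes T :: "real^'n^'m"
  assumes inj: "inj (\<lambda>x. T *v x)" and supp: "{i. u $ i \<noteq> 0} \<subseteq> J"
    and orth: "\<forall>k\<in>J. column k T \<bullet> (T *v u) = 0"
  shows "u = 0"
proof -
  have "(T *v u) \<bullet> (T *v u) = 0"
    using orth by (simp add: inner_matrix_vector_mult_supported[OF supp])
  then have "T *v u = T *v 0" by simp
  then show ?thesis using inj by (meson injD)
qed

lemma gram_system_solvable:
  fixes T :: "real^'n^'m" and b :: "'n \<Rightarrow> real"
  assumes inj: "inj (\<lambda>x. T *v x)"
  shows "\<exists>v. {i. v $ i \<noteq> 0} \<subseteq> J \<and> (\<forall>k\<in>J. column k T \<bullet> (T *v v) = b k)"
proof -
  define f where "f = (\<lambda>v::real^'n. \<chi> i. if i \<in> J then column i T \<bullet> (T *v v) else v $ i)"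
  have lin: "linear f"
    unfolding f_def by (rule linearI) (auto simp: vec_eq_iff matrix_vector_right_distrib
        matrix_vector_mult_scaleR inner_add_right)
  have "f u = 0 \<Longrightarrow> u = 0" for u
    by (rule eq_0_if_orthogonal_to_columns[OF inj, of u J]) (auto simp: f_def vec_eq_iff; metis)+
  then have "inj f"
    using lin by (metis linear_inj_iff_eq_0)
  then obtain v where "f v = (\<chi> i. if i \<in> J then b i else 0)"
    using lin linear_injective_imp_surjective by (metis surjD)
  then show ?thesis
    by (intro exI[of _ v]) (auto simp: f_def vec_eq_iff; metis)
qed

definition gram_inverse :: "real^'n^'m \<Rightarrow> 'n set \<Rightarrow> ('n \<Rightarrow> 'n \<Rightarrow> real) \<Rightarrow> bool" where
  "gram_inverse T J S \<longleftrightarrow> (\<forall>i k. (i \<notin> J \<or> k \<notin> J) \<longrightarrow> S i k = 0) \<and>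
      (\<forall>i\<in>J. \<forall>k\<in>J. (\<Sum>j\<in>J. (column i T \<bullet> column j T) * S j k) = (if i = k then 1 else 0))"

lemma S_J_eq_The_gram_inverse: "S_J T J = (THE S. gram_inverse T J S)"
  unfolding S_J_def gram_inverse_def ..

lemma gram_inverse_column:
  fixes T :: "real^'n^'m"
  assumes S: "gram_inverse T J S"
  shows "{l. (\<chi> l. S l k) $ l \<noteq> 0} \<subseteq> J"
    and "i \<in> J \<Longrightarrow> column i T \<bullet> (T *v (\<chi> l. S l k)) = (if i = k then 1 else 0)"
proof -
  show supp: "{l. (\<chi> l. S l k) $ l \<noteq> 0} \<subseteq> J"
    using S by (auto simp: gram_inverse_def)
  assume i: "i \<in> J"
  show "column i T \<bullet> (T *v (\<chi> l. S l k)) = (if i = k then 1 else 0)"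
  proof (cases "k \<in> J")
    case True
    then show ?thesis
      using S i by (simp add: gram_inverse_def inner_column_matrix_vector_mult[OF supp])
  next
    case False
    then have "(\<chi> l. S l k) = 0" using S by (simp add: gram_inverse_def vec_eq_iff)
    then show ?thesis using False i by auto
  qed
qed

lemma gram_inverse_exists:
  fixes T :: "real^'n^'m"
  assumes inj: "inj (\<lambda>x. T *v x)"
  shows "\<exists>S. gram_inverse T J S"
proof -
  have "\<exists>v. {i. v $ i \<noteq> 0} \<subseteq> J \<and> (\<forall>i\<in>J. column i T \<bullet> (T *v v) = (if i = k then 1 else 0))" for k
    using gram_system_solvable[OF inj, of J "\<lambda>i. if i = k then 1 else 0"] .
  then obtain v where v: "\<And>k. {i. v k $ i \<noteq> 0} \<subseteq> J"
      "\<And>k i. i \<in> J \<Longrightarrow> column i T \<bullet> (T *v v k) = (if i = k then 1 else 0)"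
    by metis
  define S where "S = (\<lambda>i k. if i \<in> J \<and> k \<in> J then v k $ i else 0)"
  have "(\<Sum>j\<in>J. (column i T \<bullet> column j T) * S j k) = (if i = k then 1 else 0)"
    if i: "i \<in> J" and k: "k \<in> J" for i k
  proof -
    have "(\<Sum>j\<in>J. (column i T \<bullet> column j T) * S j k) = (\<Sum>j\<in>J. (column i T \<bullet> column j T) * v k $ j)"
      using k by (intro sum.cong) (auto simp: S_def)
    also have "\<dots> = (if i = k then 1 else 0)"
      using v(2)[OF i] by (simp add: inner_column_matrix_vector_mult[OF v(1)])
    finally show ?thesis .
  qed
  then have "gram_inverse T J S"
    unfolding gram_inverse_def by (auto simp: S_def)
  then show ?thesis by blast
qed

lemma gram_inverse_unique:
  fixes T :: "real^'n^'m"
  assumes inj: "inj (\<lambda>x. T *v x)" and S: "gram_inverse T J S" and S': "gram_inverse T J S'"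
  shows "S = S'"
proof (intro ext)
  fix i k
  let ?u = "(\<chi> l. S l k) - (\<chi> l. S' l k)"
  have "?u = 0"
  proof (rule eq_0_if_orthogonal_to_columns[OF inj, of _ J])
    show "{l. ?u $ l \<noteq> 0} \<subseteq> J"
      using gram_inverse_column(1)[OF S, of k] gram_inverse_column(1)[OF S', of k]
      by (simp add: subset_iff) metis
    show "\<forall>a\<in>J. column a T \<bullet> (T *v ?u) = 0"
      using gram_inverse_column(2)[OF S] gram_inverse_column(2)[OF S']
      by (simp add: matrix_vector_mult_diff_distrib inner_diff_right)
  qed
  then show "S i k = S' i k" by (simp add: vec_eq_iff)
qed

lemma gram_inverse_S_J:
  fixes T :: "real^'n^'m"
  assumes inj: "inj (\<lambda>x. T *v x)"
  shows "gram_inverse T J (S_J T J)"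
  unfolding S_J_eq_The_gram_inverse
  using gram_inverse_exists[OF inj] gram_inverse_unique[OF inj] by (metis theI)

lemmas S_J_column = gram_inverse_column[OF gram_inverse_S_J]

lemma S_J_eq_inner:
  fixes T :: "real^'n^'m"
  assumes inj: "inj (\<lambda>x. T *v x)"
  shows "S_J T J i k = (T *v (\<chi> l. S_J T J l i)) \<bullet> (T *v (\<chi> l. S_J T J l k))"
proof -
  have "(T *v (\<chi> l. S_J T J l k)) \<bullet> (T *v (\<chi> l. S_J T J l i))
      = (\<Sum>a\<in>J. S_J T J a k * (if a = i then 1 else 0))"
    using S_J_column[OF inj]
    by (simp add: inner_matrix_vector_mult_supported[OF S_J_column(1)[OF inj]])
  also have "\<dots> = S_J T J i k"
    using gram_inverse_S_J[OF inj, of J]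
    by (auto simp: gram_inverse_def if_distrib cong: if_cong)
  finally show ?thesis by (simp add: inner_commute)
qed

lemma S_J_sym:
  fixes T :: "real^'n^'m"
  assumes inj: "inj (\<lambda>x. T *v x)"
  shows "S_J T J i k = S_J T J k i"
  using S_J_eq_inner[OF inj] by (metis inner_commute)

lemma S_J_diag_pos:
  fixes T :: "real^'n^'m"
  assumes inj: "inj (\<lambda>x. T *v x)" and i: "i \<in> J"
  shows "0 < S_J T J i i"
proof -
  have "column i T \<bullet> (T *v (\<chi> l. S_J T J l i)) = 1"
    using S_J_column(2)[OF inj i] by simp
  then have "T *v (\<chi> l. S_J T J l i) \<noteq> 0" by auto
  then show ?thesis by (simp add: S_J_eq_inner[OF inj, of J i i])
qed

lemma S_J_left_inverse:
  fixes T :: "real^'n^'m"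
  assumes inj: "inj (\<lambda>x. T *v x)" and supp: "{l. w $ l \<noteq> 0} \<subseteq> J" and j: "j \<in> J"
  shows "(\<Sum>k\<in>J. S_J T J j k * (column k T \<bullet> (T *v w))) = w $ j"
proof -
  have "(\<Sum>k\<in>J. S_J T J j k * (column k T \<bullet> (T *v w))) = (T *v (\<chi> l. S_J T J l j)) \<bullet> (T *v w)"
    by (simp add: inner_matrix_vector_mult_supported[OF S_J_column(1)[OF inj]] S_J_sym[OF inj, of J j])
  also have "\<dots> = (\<Sum>k\<in>J. w $ k * (if k = j then 1 else 0))"
    by (simp add: inner_commute inner_matrix_vector_mult_supported[OF supp] S_J_column(2)[OF inj])
  also have "\<dots> = w $ j" using j by (simp add: if_distrib cong: if_cong)
  finally show ?thesis .
qed

lemma positive_cone_bound: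
  fixes T :: "real^'n^'m"
  assumes inj: "inj (\<lambda>x. T *v x)" and pcc: "positive_cone_condition T"
    and supp: "{l. w $ l \<noteq> 0} \<subseteq> I" and j: "j \<notin> I"
    and bound: "\<forall>k\<in>I. \<bar>column k T \<bullet> (T *v w)\<bar> \<le> 1"
  shows "\<bar>column j T \<bullet> (T *v w)\<bar> \<le> 1"
proof -
  define J where "J = insert j I"
  let ?S = "S_J T J" and ?g = "\<lambda>k. column k T \<bullet> (T *v w)"
  have jJ: "j \<in> J" and IJ: "J - {j} = I" using j by (auto simp: J_def)
  have pos: "0 < ?S j j" by (rule S_J_diag_pos[OF inj jJ])
  have "w $ j = 0" using supp j by auto
  moreover have "?S j j * ?g j + (\<Sum>k\<in>I. ?S j k * ?g k) = w $ j"
    using S_J_left_inverse[OF inj _ jJ, of w] supp j by (simp add: J_def subset_insertI2)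
  ultimately have "\<bar>?S j j * ?g j\<bar> = \<bar>\<Sum>k\<in>I. ?S j k * ?g k\<bar>"
    by (simp add: eq_neg_iff_add_eq_0)
  then have "?S j j * \<bar>?g j\<bar> = \<bar>\<Sum>k\<in>I. ?S j k * ?g k\<bar>"
    using pos by (simp add: abs_mult)
  also have "\<dots> \<le> (\<Sum>k\<in>I. \<bar>?S j k * ?g k\<bar>)"
    by (rule sum_abs)
  also have "\<dots> \<le> (\<Sum>k\<in>I. \<bar>?S j k\<bar>)"
  proof (rule sum_mono)
    fix k assume "k \<in> I"
    then have "\<bar>?g k\<bar> \<le> 1" using bound by blast
    then show "\<bar>?S j k * ?g k\<bar> \<le> \<bar>?S j k\<bar>" by (simp add: abs_mult mult_left_le)
  qed
  also have "\<dots> \<le> ?S j j * 1"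
  proof -
    have "J \<noteq> {}" using jJ by auto
    then have "?S j j - (\<Sum>k\<in>J - {j}. \<bar>?S j k\<bar>) \<ge> 0"
      using pcc jJ unfolding positive_cone_condition_def by blast
    then show ?thesis unfolding IJ by simp
  qed
  finally show ?thesis using pos by (simp only: mult_le_cancel_left_pos)
qed

definition lasso_correlation :: "real^'n^'m \<Rightarrow> real^'m \<Rightarrow> real \<Rightarrow> real^'n \<Rightarrow> 'n \<Rightarrow> real" where
  "lasso_correlation T y lam x i = lam * (column i T \<bullet> (y - T *v x))"

definition l1_subgradient :: "('n \<Rightarrow> real) \<Rightarrow> real^'n \<Rightarrow> bool" where
  "l1_subgradient c x \<longleftrightarrow> (\<forall>i. \<bar>c i\<bar> \<le> 1 \<and> c i * x $ i = \<bar>x $ i\<bar>)"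

lemma lasso_obj_add:
  fixes T :: "real^'n^'m"
  shows "lasso_obj T y lam (x + d) = lasso_obj T y lam x
     - (\<Sum>k\<in>UNIV. d $ k * lasso_correlation T y lam x k)
     + lam / 2 * (norm (T *v d))\<^sup>2 + (\<Sum>k\<in>UNIV. \<bar>x $ k + d $ k\<bar> - \<bar>x $ k\<bar>)"
proof -
  have sq: "(norm (T *v (x + d) - y))\<^sup>2
      = (norm (T *v x - y))\<^sup>2 + 2 * ((T *v d) \<bullet> (T *v x - y)) + (norm (T *v d))\<^sup>2"
    by (simp add: power2_norm_eq_inner matrix_vector_right_distrib inner_add inner_diff
        inner_commute algebra_simps)
  have "lam / 2 * (norm (T *v (x + d) - y))\<^sup>2
      = lam / 2 * (norm (T *v x - y))\<^sup>2 + lam * ((T *v d) \<bullet> (T *v x - y)) + lam / 2 * (norm (T *v d))\<^sup>2"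
    unfolding sq by (simp add: algebra_simps)
  moreover have "lam * ((T *v d) \<bullet> (T *v x - y)) = - (\<Sum>k\<in>UNIV. d $ k * lasso_correlation T y lam x k)"
    using inner_matrix_vector_mult_supported[of d UNIV T "T *v x - y"]
    by (simp add: lasso_correlation_def sum_distrib_left sum_negf[symmetric] inner_diff
        algebra_simps)
  ultimately show ?thesis
    unfolding lasso_obj_def sum_subtractf vector_add_component by linarith
qed

lemma mult_le_abs_if_abs_le_one:
  fixes c x :: real
  assumes "\<bar>c\<bar> \<le> 1"
  shows "c * x \<le> \<bar>x\<bar>"
proof -
  have "c * x \<le> \<bar>c\<bar> * \<bar>x\<bar>" by (simp flip: abs_mult)
  also have "\<dots> \<le> \<bar>x\<bar>" using assms by (simp add: mult_left_le_one_le)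
  finally show ?thesis .
qed

lemma nonpos_if_le_linear:
  fixes a B :: real
  assumes "\<And>h. 0 < h \<Longrightarrow> h < 1 \<Longrightarrow> a \<le> B * h"
  shows "a \<le> 0"
proof (rule tendsto_lowerbound)
  show "((\<lambda>h. B * h) \<longlongrightarrow> 0) (at_right 0)"
    by (auto intro!: tendsto_eq_intros)
  show "\<forall>\<^sub>F h in at_right 0. a \<le> B * h"
    using assms by (auto simp: eventually_at_right_field intro!: exI[of _ 1])
qed simp

lemma abs_subgradient_if_quadratic_bound:
  fixes c x A :: real
  assumes le: "\<And>t. t * c \<le> A * t\<^sup>2 + \<bar>x + t\<bar> - \<bar>x\<bar>"
  shows "\<bar>c\<bar> \<le> 1 \<and> c * x = \<bar>x\<bar>"
proof -
  have "c - 1 \<le> 0"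
  proof (rule nonpos_if_le_linear)
    fix h :: real assume "0 < h"
    then have "h * (c - 1) \<le> h * (A * h)"
      using le[of h] abs_triangle_ineq[of x h] by (simp add: power2_eq_square algebra_simps)
    then show "c - 1 \<le> A * h" using \<open>0 < h\<close> by simp
  qed
  moreover have "- c - 1 \<le> 0"
  proof (rule nonpos_if_le_linear)
    fix h :: real assume "0 < h"
    then have "h * (- c - 1) \<le> h * (A * h)"
      using le[of "- h"] abs_triangle_ineq[of x "- h"] by (simp add: power2_eq_square algebra_simps)
    then show "- c - 1 \<le> A * h" using \<open>0 < h\<close> by simp
  qed
  moreover have "\<bar>x\<bar> - c * x \<le> 0"
  proof (rule nonpos_if_le_linear)
    fix h :: real assume "0 < h" "h < 1"
    have "x - h * x = (1 - h) * x" by (simp add: algebra_simps)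
    then have "\<bar>x - h * x\<bar> = (1 - h) * \<bar>x\<bar>"
      using \<open>h < 1\<close> by (simp add: abs_mult)
    then have "h * (\<bar>x\<bar> - c * x) \<le> h * (A * x\<^sup>2 * h)"
      using le[of "- h * x"] by (simp add: power2_eq_square algebra_simps)
    then show "\<bar>x\<bar> - c * x \<le> A * x\<^sup>2 * h" using \<open>0 < h\<close> by simp
  qed
  ultimately show ?thesis
    using mult_le_abs_if_abs_le_one[of c x] by linarith
qed

lemma lasso_optimal_imp_l1_subgradient:
  fixes T :: "real^'n^'m"
  assumes min: "\<forall>z. lasso_obj T y lam x \<le> lasso_obj T y lam z"
  shows "l1_subgradient (lasso_correlation T y lam x) x"
  unfolding l1_subgradient_def
proof
  fix i
  let ?c = "lasso_correlation T y lam x"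
  show "\<bar>?c i\<bar> \<le> 1 \<and> ?c i * x $ i = \<bar>x $ i\<bar>"
  proof (rule abs_subgradient_if_quadratic_bound)
    fix t
    let ?d = "t *\<^sub>R axis i (1::real)"
    have "?d $ k * ?c k = (if k = i then t * ?c i else 0)"
      and "\<bar>x $ k + ?d $ k\<bar> - \<bar>x $ k\<bar> = (if k = i then \<bar>x $ i + t\<bar> - \<bar>x $ i\<bar> else 0)" for k
      by (simp_all add: axis_def)
    then have corr: "(\<Sum>k\<in>UNIV. ?d $ k * ?c k) = t * ?c i"
      and abs: "(\<Sum>k\<in>UNIV. \<bar>x $ k + ?d $ k\<bar> - \<bar>x $ k\<bar>) = \<bar>x $ i + t\<bar> - \<bar>x $ i\<bar>"
      by simp_all
    have norm: "(norm (T *v ?d))\<^sup>2 = (norm (column i T))\<^sup>2 * t\<^sup>2"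
      by (simp add: matrix_vector_mult_scaleR matrix_vector_mult_basis power_mult_distrib)
    have "lasso_obj T y lam x \<le> lasso_obj T y lam (x + ?d)"
      using min by blast
    then show "t * ?c i \<le> lam / 2 * (norm (column i T))\<^sup>2 * t\<^sup>2 + \<bar>x $ i + t\<bar> - \<bar>x $ i\<bar>"
      unfolding lasso_obj_add corr abs norm by simp
  qed
qed

lemma l1_subgradient_imp_lasso_optimal:
  fixes T :: "real^'n^'m"
  assumes lam: "0 \<le> lam" and sub: "l1_subgradient (lasso_correlation T y lam x) x"
  shows "lasso_obj T y lam x \<le> lasso_obj T y lam z"
proof -
  let ?c = "lasso_correlation T y lam x" and ?d = "z - x"
  have "?d $ k * ?c k \<le> \<bar>x $ k + ?d $ k\<bar> - \<bar>x $ k\<bar>" for k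
  proof -
    have "?c k * z $ k \<le> \<bar>z $ k\<bar>" "?c k * x $ k = \<bar>x $ k\<bar>"
      using sub mult_le_abs_if_abs_le_one unfolding l1_subgradient_def by blast+
    then show ?thesis by (simp add: algebra_simps)
  qed
  then have "(\<Sum>k\<in>UNIV. ?d $ k * ?c k) \<le> (\<Sum>k\<in>UNIV. \<bar>x $ k + ?d $ k\<bar> - \<bar>x $ k\<bar>)"
    by (rule sum_mono)
  moreover have "0 \<le> lam / 2 * (norm (T *v ?d))\<^sup>2" using lam by simp
  ultimately show ?thesis
    using lasso_obj_add[of T y lam x ?d] by simp
qed

lemma l1_subgradient_monotone:
  assumes "l1_subgradient c x" and "l1_subgradient c' x'"
  shows "0 \<le> (\<Sum>i\<in>UNIV. (c i - c' i) * (x $ i - x' $ i))"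
proof (rule sum_nonneg)
  fix i
  have "c i * x' $ i \<le> \<bar>x' $ i\<bar>" "c' i * x $ i \<le> \<bar>x $ i\<bar>"
    "c i * x $ i = \<bar>x $ i\<bar>" "c' i * x' $ i = \<bar>x' $ i\<bar>"
    using assms mult_le_abs_if_abs_le_one unfolding l1_subgradient_def by blast+
  then show "0 \<le> (c i - c' i) * (x $ i - x' $ i)"
    by (simp add: algebra_simps)
qed

lemma l1_subgradient_lasso_unique:
  fixes T :: "real^'n^'m"
  assumes inj: "inj (\<lambda>x. T *v x)" and lam: "0 < lam"
    and "l1_subgradient (lasso_correlation T y lam x) x"
    and "l1_subgradient (lasso_correlation T y lam x') x'"
  shows "x = x'"
proof -
  let ?d = "x - x'"
  have "(\<Sum>i\<in>UNIV. (lasso_correlation T y lam x i - lasso_correlation T y lam x' i) * ?d $ i)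
      = - lam * ((T *v ?d) \<bullet> (T *v ?d))"
    using inner_matrix_vector_mult_supported[of ?d UNIV T "T *v ?d"]
    by (simp add: lasso_correlation_def sum_distrib_left matrix_vector_mult_diff_distrib
        inner_diff_right algebra_simps)
  then have "(T *v ?d) \<bullet> (T *v ?d) \<le> 0"
    using l1_subgradient_monotone[OF assms(3,4)] lam by (simp add: mult_le_0_iff)
  then have "T *v ?d = 0" by (metis inner_eq_zero_iff inner_ge_zero order_antisym)
  then have "T *v x = T *v x'" by (simp add: matrix_vector_mult_diff_distrib)
  then show ?thesis using inj by (meson injD)
qed

lemma lasso_obj_ge_norm:
  fixes T :: "real^'n^'m"
  assumes "0 \<le> lam"
  shows "norm x \<le> lasso_obj T y lam x"
proof -
  have "0 \<le> lam / 2 * (norm (T *v x - y))\<^sup>2" using assms by simp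
  then show ?thesis using norm_le_l1_cart[of x] unfolding lasso_obj_def by linarith
qed

lemma lasso_minimizer_exists:
  fixes T :: "real^'n^'m"
  assumes lam: "0 \<le> lam"
  shows "\<exists>x. \<forall>z. lasso_obj T y lam x \<le> lasso_obj T y lam z"
proof -
  define r where "r = lasso_obj T y lam 0"
  have "continuous_on (cball 0 r) (lasso_obj T y lam)"
    unfolding lasso_obj_def by (intro continuous_intros)
  moreover have r: "0 \<le> r"
    using lasso_obj_ge_norm[OF lam, of 0 T y] by (simp add: r_def)
  ultimately obtain x where "x \<in> cball 0 r"
    and min: "\<forall>z\<in>cball 0 r. lasso_obj T y lam x \<le> lasso_obj T y lam z"
    using continuous_attains_inf[OF compact_cball] by (metis cball_eq_empty not_less)
  have "lasso_obj T y lam x \<le> lasso_obj T y lam z" for z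
  proof (cases "z \<in> cball 0 r")
    case False
    then have "r < lasso_obj T y lam z"
      using lasso_obj_ge_norm[OF lam, of z T y] by simp
    moreover have "lasso_obj T y lam x \<le> r"
      using min r by (simp add: r_def)
    ultimately show ?thesis by simp
  qed (use min in blast)
  then show ?thesis by blast
qed

lemma lasso_min_eq_iff:
  fixes T :: "real^'n^'m"
  assumes inj: "inj (\<lambda>x. T *v x)" and lam: "0 < lam"
  shows "lasso_min T y lam = x \<longleftrightarrow> l1_subgradient (lasso_correlation T y lam x) x"
proof -
  let ?min = "\<lambda>x. \<forall>z. lasso_obj T y lam x \<le> lasso_obj T y lam z"
  have min_iff: "?min x \<longleftrightarrow> l1_subgradient (lasso_correlation T y lam x) x" for x
    using lasso_optimal_imp_l1_subgradient l1_subgradient_imp_lasso_optimal lam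
    by (metis less_imp_le)
  have unique: "a = b" if "?min a" "?min b" for a b
    using l1_subgradient_lasso_unique[OF inj lam] that by (simp add: min_iff)
  obtain x0 where x0: "?min x0"
    using lasso_minimizer_exists lam less_imp_le by blast
  then have "?min (lasso_min T y lam)"
    unfolding lasso_min_def by (rule theI) (use unique x0 in blast)
  then have "lasso_min T y lam = x \<longleftrightarrow> ?min x"
    using unique by blast
  then show ?thesis by (simp add: min_iff)
qed

lemma abs_subgradient_stable:
  fixes c x d :: real
  assumes "\<bar>c\<bar> \<le> 1" and cx: "c * x = \<bar>x\<bar>" and small: "\<bar>d\<bar> < \<bar>x\<bar>"
  shows "c * (x + d) = \<bar>x + d\<bar>"
proof -
  have "\<bar>c\<bar> * \<bar>x\<bar> = \<bar>x\<bar>" using cx by (metis abs_abs abs_mult)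
  moreover have "x \<noteq> 0" using small by auto
  ultimately have c: "\<bar>c\<bar> = 1" by simp
  have "c * (x + d) \<ge> \<bar>x\<bar> - \<bar>d\<bar>"
    using cx c mult_le_abs_if_abs_le_one[of "- c" d] by (simp add: algebra_simps)
  then have "0 < c * (x + d)" using small by linarith
  moreover have "\<bar>c * (x + d)\<bar> = \<bar>x + d\<bar>" using c by (simp add: abs_mult)
  ultimately show ?thesis by simp
qed

lemma lasso_min_shift:
  fixes T :: "real^'n^'m" and w :: "real^'n"
  assumes inj: "inj (\<lambda>x. T *v x)" and lam: "0 < lam" and mu: "0 < mu" "mu \<le> lam"
    and x: "lasso_min T y lam = x"
    and supp: "{i. w $ i \<noteq> 0} \<subseteq> {i. x $ i \<noteq> 0}"
    and on_supp: "\<forall>i. x $ i \<noteq> 0 \<longrightarrow> column i T \<bullet> (T *v w) = lasso_correlation T y lam x i"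
    and bound: "\<forall>i. \<bar>column i T \<bullet> (T *v w)\<bar> \<le> 1"
    and small: "\<forall>i. x $ i \<noteq> 0 \<longrightarrow> \<bar>1 / lam - 1 / mu\<bar> * norm w < \<bar>x $ i\<bar>"
  shows "lasso_min T y mu = x + (1 / lam - 1 / mu) *\<^sub>R w"
proof -
  define a where "a = 1 / lam - 1 / mu"
  let ?z = "x + a *\<^sub>R w" and ?c = "lasso_correlation T y lam x"
    and ?g = "\<lambda>i. column i T \<bullet> (T *v w)"
  have sub: "l1_subgradient ?c x" using x lasso_min_eq_iff[OF inj lam] by blast
  have corr: "lasso_correlation T y mu ?z i = (mu / lam) * ?c i + (1 - mu / lam) * ?g i" for i
    using lam mu by (simp add: lasso_correlation_def a_def matrix_vector_right_distrib
        matrix_vector_mult_scaleR inner_diff_right inner_add_right field_simps)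
  have "l1_subgradient (lasso_correlation T y mu ?z) ?z"
    unfolding l1_subgradient_def
  proof
    fix i
    show "\<bar>lasso_correlation T y mu ?z i\<bar> \<le> 1 \<and> lasso_correlation T y mu ?z i * ?z $ i = \<bar>?z $ i\<bar>"
    proof (cases "x $ i = 0")
      case True
      then have z: "?z $ i = 0" using supp by auto
      have t: "0 \<le> mu / lam" "0 \<le> 1 - mu / lam" using lam mu by auto
      have "\<bar>(mu / lam) * ?c i + (1 - mu / lam) * ?g i\<bar> \<le> (mu / lam) * \<bar>?c i\<bar> + (1 - mu / lam) * \<bar>?g i\<bar>"
        using abs_triangle_ineq t by (metis abs_mult abs_of_nonneg)
      also have "\<dots> \<le> (mu / lam) * 1 + (1 - mu / lam) * 1"
        using sub bound t unfolding l1_subgradient_def by (intro add_mono mult_left_mono) auto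
      finally show ?thesis unfolding corr z by simp
    next
      case False
      have "\<bar>a * w $ i\<bar> \<le> \<bar>a\<bar> * norm w"
        by (simp add: abs_mult mult_left_mono component_le_norm_cart)
      then have "\<bar>a * w $ i\<bar> < \<bar>x $ i\<bar>" using small False unfolding a_def by fastforce
      then show ?thesis
        using sub on_supp False abs_subgradient_stable[of "?c i" "x $ i" "a * w $ i"]
        unfolding l1_subgradient_def corr by (simp add: algebra_simps)
    qed
  qed
  then show ?thesis unfolding a_def by (simp add: lasso_min_eq_iff[OF inj mu(1)])
qed

lemma eventually_at_left_imp_interval:
  fixes a :: real
  assumes ev: "eventually P (at_left a)" and "P a" and "0 < a"
  shows "\<exists>\<epsilon>. 0 < \<epsilon> \<and> \<epsilon> < a \<and> (\<forall>\<mu>. a - \<epsilon> \<le> \<mu> \<and> \<mu> \<le> a \<longrightarrow> P \<mu>)"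
proof -
  obtain b where "b < a" and b: "\<forall>\<mu>>b. \<mu> < a \<longrightarrow> P \<mu>"
    using ev by (auto simp: eventually_at_left_field)
  define \<epsilon> where "\<epsilon> = min (a / 2) ((a - b) / 2)"
  have "0 < \<epsilon>" "\<epsilon> < a" "b < a - \<epsilon>"
    using \<open>b < a\<close> \<open>0 < a\<close> by (auto simp: \<epsilon>_def min_def field_simps)
  moreover have "P \<mu>" if "a - \<epsilon> \<le> \<mu>" "\<mu> \<le> a" for \<mu>
    using b \<open>P a\<close> \<open>b < a - \<epsilon>\<close> that by (cases "\<mu> = a") auto
  ultimately show ?thesis by blast
qed

lemma lasso_path_direction:
  fixes T :: "real^'n^'m" and y :: "real^'m"
  assumes inj: "inj (\<lambda>x. T *v x)" and pcc: "positive_cone_condition T" and lam: "0 < lam"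
  defines "x \<equiv> lasso_min T y lam"
  obtains w where "{i. w $ i \<noteq> 0} \<subseteq> {i. x $ i \<noteq> 0}"
    and "\<forall>i. x $ i \<noteq> 0 \<longrightarrow> column i T \<bullet> (T *v w) = lasso_correlation T y lam x i"
    and "\<forall>i. \<bar>column i T \<bullet> (T *v w)\<bar> \<le> 1"
proof -
  have sub: "l1_subgradient (lasso_correlation T y lam x) x"
    using lasso_min_eq_iff[OF inj lam] x_def by blast
  obtain w where supp: "{i. w $ i \<noteq> 0} \<subseteq> {i. x $ i \<noteq> 0}"
    and on_supp: "\<forall>k\<in>{i. x $ i \<noteq> 0}. column k T \<bullet> (T *v w) = lasso_correlation T y lam x k"
    using gram_system_solvable[OF inj] by blast
  have "\<forall>j. \<bar>column j T \<bullet> (T *v w)\<bar> \<le> 1"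
    using positive_cone_bound[OF inj pcc supp] on_supp sub
    unfolding l1_subgradient_def by (metis mem_Collect_eq)
  then show ?thesis using that supp on_supp by blast
qed

theorem mainTheorem16:
  fixes T :: "real^'n^'m" and y :: "real^'m" and lam :: real
  assumes "inj (\<lambda>x. T *v x)"
    and "positive_cone_condition T"
    and "lam > 0"
  shows "\<exists>\<epsilon>. 0 < \<epsilon> \<and> \<epsilon> < lam \<and>
           (\<forall>\<mu>. lam - \<epsilon> \<le> \<mu> \<and> \<mu> \<le> lam \<longrightarrow> zero_set T y lam \<subseteq> zero_set T y \<mu>)"
proof -
  note inj = assms(1) and lam = assms(3)
  define x where "x = lasso_min T y lam"
  obtain w where supp: "{i. w $ i \<noteq> 0} \<subseteq> {i. x $ i \<noteq> 0}"
    and on_supp: "\<forall>i. x $ i \<noteq> 0 \<longrightarrow> column i T \<bullet> (T *v w) = lasso_correlation T y lam x i"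
    and bound: "\<forall>i. \<bar>column i T \<bullet> (T *v w)\<bar> \<le> 1"
    using lasso_path_direction[OF inj assms(2) lam] unfolding x_def by blast
  define \<delta> where "\<delta> = Min (insert 1 ((\<lambda>i. \<bar>x $ i\<bar>) ` {i. x $ i \<noteq> 0}))"
  have "0 < \<delta>" unfolding \<delta>_def by (subst Min_gr_iff) auto
  have "((\<lambda>\<mu>. \<bar>1 / lam - 1 / \<mu>\<bar> * norm w) \<longlongrightarrow> 0) (at_left lam)"
    using lam by (auto intro!: tendsto_eq_intros)
  then have "\<forall>\<^sub>F \<mu> in at_left lam. 0 < \<mu> \<and> \<bar>1 / lam - 1 / \<mu>\<bar> * norm w < \<delta>"
    using \<open>0 < \<delta>\<close> eventually_at_left_real[OF lam]
    by (auto elim!: eventually_elim2 dest: order_tendstoD(2))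
  then obtain \<epsilon> where \<epsilon>: "0 < \<epsilon>" "\<epsilon> < lam"
    and near: "\<forall>\<mu>. lam - \<epsilon> \<le> \<mu> \<and> \<mu> \<le> lam \<longrightarrow> 0 < \<mu> \<and> \<bar>1 / lam - 1 / \<mu>\<bar> * norm w < \<delta>"
    using eventually_at_left_imp_interval[of _ lam] lam \<open>0 < \<delta>\<close> by force
  have "lasso_min T y \<mu> = x + (1 / lam - 1 / \<mu>) *\<^sub>R w" if "lam - \<epsilon> \<le> \<mu>" "\<mu> \<le> lam" for \<mu>
  proof (rule lasso_min_shift[OF inj lam _ that(2) x_def[symmetric] supp on_supp bound])
    show "0 < \<mu>" using near that by blast
    show "\<forall>i. x $ i \<noteq> 0 \<longrightarrow> \<bar>1 / lam - 1 / \<mu>\<bar> * norm w < \<bar>x $ i\<bar>"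
      using near that unfolding \<delta>_def by (fastforce intro: order.strict_trans2 Min_le)
  qed
  then show ?thesis
    using \<epsilon> supp unfolding zero_set_def x_def[symmetric] by fastforce
qed

end
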